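(* Let $1\le M\le N$, let $\mathbf{H}$ be a complex $N\times M$ matrix of full column rank, and let $\mathbf{H}^{-\mathtt{H}}=\mathbf{H}(\mathbf{H}^{\mathtt{H}}\mathbf{H})^{-1}$. Let $\mathbf{B}=[\mathbf{b}_1,\dots,\mathbf{b}_M]=\mathbf{H}^{-\mathtt{H}}\mathbf{U}$, with $\mathbf{U}$ an $M\times M$ unimodular matrix over $\mathbb{Z}[i]$, be an LLL-reduced basis of the lattice generated by $\mathbf{H}^{-\mathtt{H}}$, let $\delta$ be its orthogonality defect, and write $\mathbf{B}^{-\mathtt{H}}=\mathbf{B}(\mathbf{B}^{\mathtt{H}}\mathbf{B})^{-1}=[\mathbf{a}_1,\dots,\mathbf{a}_M]$. Suppose $\mathbf{y}=\mathbf{H}\mathbf{x}+\mathbf{w}$ with $\mathbf{x}\in\mathbb{Z}[i]^M$ and $\mathbf{w}\in\mathbb{C}^N$. If $$\|\mathbf{w}\|<\frac{\min\{\|\mathbf{a}_1\|,\dots,\|\mathbf{a}_M\|\}}{2\sqrt{M\delta}},$$ then the LLL-aided (type I) decoder correctly decodes, i.e. $\widehat{\mathbf{x}}=\mathbf{x}$.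
   Context: $(\cdot)^{\mathtt{H}}$ is the conjugate transpose; $\mathbb{Z}[i]$ is the ring of Gaussian integers; a unimodular matrix is a matrix with entries in $\mathbb{Z}[i]$ whose inverse also has entries in $\mathbb{Z}[i]$. The lattice generated by an $N\times M$ matrix $\mathbf{G}$ of full column rank is $\{\mathbf{G}\mathbf{z}:\mathbf{z}\in\mathbb{Z}[i]^M\}$. The orthogonality defect of $\mathbf{B}=[\mathbf{b}_1,\dots,\mathbf{b}_M]$ is $\delta=\|\mathbf{b}_1\|^2\cdots\|\mathbf{b}_M\|^2/\det(\mathbf{B}^{\mathtt{H}}\mathbf{B})$. A basis is LLL-reduced in the sense of the Lenstra–Lenstra–Lovász reduction (extended to complex lattices over $\mathbb{Z}[i]$): with Gram–Schmidt vectors $\mathbf{b}_k^*$ and coefficients $\mu_{k,j}=\langle\mathbf{b}_k,\mathbf{b}_j^*\rangle/\|\mathbf{b}_j^*\|^2$, one has $|\mathrm{Re}\,\mu_{k,j}|,|\mathrm{Im}\,\mu_{k,j}|\le 1/2$ for $j<k$ and $\|\mathbf{b}_k^*\|^2\ge(3/4-|\mu_{k,k-1}|^2)\|\mathbf{b}_{k-1}^*\|^2$. The LLL-aided (type I) decoder computes $\tilde{\mathbf{x}}$ as the closest point of $\mathbb{Z}[i]^M$ to $\mathbf{B}^{\mathtt{H}}\mathbf{y}$ (componentwise rounding of real and imaginary parts) and outputs $\widehat{\mathbf{x}}=\mathbf{U}^{-\mathtt{H}}\tilde{\mathbf{x}}$. *)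

theory Defs
  imports "Jordan_Normal_Form.DL_Rank" "Jordan_Normal_Form.Gram_Schmidt"
    "Jordan_Normal_Form.Schur_Decomposition"
begin

definition gauss_int :: "complex \<Rightarrow> bool" where
  "gauss_int z \<longleftrightarrow> Re z \<in> \<int> \<and> Im z \<in> \<int>"

definition gauss_vec :: "complex vec \<Rightarrow> bool" where
  "gauss_vec v \<longleftrightarrow> (\<forall>i < dim_vec v. gauss_int (v $ i))"

definition gauss_mat :: "complex mat \<Rightarrow> bool" where
  "gauss_mat A \<longleftrightarrow> (\<forall>i < dim_row A. \<forall>j < dim_col A. gauss_int (A $$ (i, j)))"

definition unimodular :: "nat \<Rightarrow> complex mat \<Rightarrow> bool" where
  "unimodular m U \<longleftrightarrow> U \<in> carrier_mat m m \<and> gauss_mat U \<and>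
     (\<exists>V \<in> carrier_mat m m. gauss_mat V \<and> inverts_mat U V \<and> inverts_mat V U)"

definition mat_inv :: "'a :: field mat \<Rightarrow> 'a mat" where
  "mat_inv A = (SOME B. B \<in> carrier_mat (dim_row A) (dim_row A) \<and> inverts_mat A B \<and> inverts_mat B A)"

(* A^{-H} = A (A^H A)^{-1}; mat_adjoint is the conjugate transpose *)
definition pinv_H :: "complex mat \<Rightarrow> complex mat" where
  "pinv_H A = A * mat_inv (mat_adjoint A * A)"

definition vnorm :: "complex vec \<Rightarrow> real" where
  "vnorm v = sqrt (\<Sum>i<dim_vec v. (cmod (v $ i))^2)"

(* Gram-Schmidt vectors b_k^* of the columns of B (not normalised) *)
definition gs :: "complex mat \<Rightarrow> nat \<Rightarrow> complex vec" where
  "gs B k = gram_schmidt (dim_row B) (cols B) ! k"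

(* mu_{k,j} = <b_k, b_j^*> / ||b_j^*||^2, with <u,v> = sum u_i conj(v_i) *)
definition gs_mu :: "complex mat \<Rightarrow> nat \<Rightarrow> nat \<Rightarrow> complex" where
  "gs_mu B k j = (col B k \<bullet>c gs B j) / of_real ((vnorm (gs B j))^2)"

(* complex LLL reduction (delta = 3/4), columns indexed 0..M-1 *)
definition lll_reduced :: "complex mat \<Rightarrow> bool" where
  "lll_reduced B \<longleftrightarrow>
     (\<forall>k < dim_col B. \<forall>j < k. \<bar>Re (gs_mu B k j)\<bar> \<le> 1/2 \<and> \<bar>Im (gs_mu B k j)\<bar> \<le> 1/2) \<and>
     (\<forall>k. 1 \<le> k \<and> k < dim_col B \<longrightarrow>
        (vnorm (gs B k))^2 \<ge> (3/4 - (cmod (gs_mu B k (k - 1)))^2) * (vnorm (gs B (k - 1)))^2)"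

(* orthogonality defect; det(B^H B) is a positive real for full column rank B *)
definition orth_defect :: "complex mat \<Rightarrow> real" where
  "orth_defect B = (\<Prod>k<dim_col B. (vnorm (col B k))^2) / Re (det (mat_adjoint B * B))"

definition round_gauss :: "complex \<Rightarrow> complex" where
  "round_gauss z = Complex (of_int (round (Re z))) (of_int (round (Im z)))"

definition round_vec :: "complex vec \<Rightarrow> complex vec" where
  "round_vec v = map_vec round_gauss v"

definition lll_decode :: "complex mat \<Rightarrow> complex mat \<Rightarrow> complex vec \<Rightarrow> complex vec" where
  "lll_decode B U y = mat_adjoint (mat_inv U) *\<^sub>v round_vec (mat_adjoint B *\<^sub>v y)"

end

theory Submission
  imports Defs "HOL-Analysis.L2_Norm"
begin

(* Since B^H H = U^H, the decoder rounds B^H y = U^H x + B^H w, and by Cauchy-Schwarz the k-th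
   noise component is at most |b_k| |w|; rounding therefore returns U^H x once |b_k| |w| < 1/2 for
   all k.  The dual vector a_k satisfies |a_k|^2 = ((B^H B)^-1)_kk, the Gram determinant of the
   other columns divided by det (B^H B), so Hadamard's inequality gives |a_k|^2 |b_k|^2 <= delta,
   which turns the bound on |w| into the rounding condition. *)

lemma mat_adjoint_dim [simp]:
  "dim_row (mat_adjoint A) = dim_col A" "dim_col (mat_adjoint A) = dim_row A"
  unfolding mat_adjoint_def by auto

lemma index_mat_adjoint [simp]:
  "i < dim_col A \<Longrightarrow> j < dim_row A \<Longrightarrow> mat_adjoint A $$ (i, j) = cnj (A $$ (j, i))"
  unfolding mat_adjoint_def by (auto simp: mat_of_rows_def)

lemma mat_adjoint_carrier [simp]: "A \<in> carrier_mat n m \<Longrightarrow> mat_adjoint A \<in> carrier_mat m n"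
  by auto

lemma mat_adjoint_adjoint [simp]: "mat_adjoint (mat_adjoint (A :: complex mat)) = A"
  by (rule eq_matI) auto

lemma mat_adjoint_one [simp]: "mat_adjoint (1\<^sub>m n :: complex mat) = 1\<^sub>m n"
  by (rule eq_matI) auto

lemma mat_adjoint_mult:
  assumes "A \<in> carrier_mat n k" "B \<in> carrier_mat k m"
  shows "mat_adjoint (A * B :: complex mat) = mat_adjoint B * mat_adjoint A"
proof (rule eq_matI)
  fix i j assume "i < dim_row (mat_adjoint B * mat_adjoint A)" "j < dim_col (mat_adjoint B * mat_adjoint A)"
  then have "i < m" "j < n" using assms by auto
  then show "mat_adjoint (A * B) $$ (i, j) = (mat_adjoint B * mat_adjoint A) $$ (i, j)"
    using assms by (auto simp: scalar_prod_def cnj_sum mult.commute intro!: sum.cong)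
qed (use assms in auto)

lemma det_mat_adjoint:
  assumes "A \<in> carrier_mat n n"
  shows "det (mat_adjoint (A :: complex mat)) = cnj (det A)"
proof -
  interpret cnj: comm_ring_hom cnj by unfold_locales auto
  have "mat_adjoint A = transpose_mat (map_mat cnj A)"
    using assms by (intro eq_matI) auto
  then show ?thesis using assms by (simp add: det_transpose)
qed

lemma index_mult_mat_sum:
  "A \<in> carrier_mat n k \<Longrightarrow> B \<in> carrier_mat k m \<Longrightarrow> i < n \<Longrightarrow> j < m \<Longrightarrow>
   (A * B) $$ (i, j) = (\<Sum>l<k. A $$ (i, l) * B $$ (l, j))"
  by (auto simp: scalar_prod_def lessThan_atLeast0 intro!: sum.cong)

lemma index_gram_mat:
  "C \<in> carrier_mat n m \<Longrightarrow> i < m \<Longrightarrow> j < m \<Longrightarrow>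
   (mat_adjoint C * C) $$ (i, j) = (\<Sum>l<n. cnj (C $$ (l, i)) * C $$ (l, j))"
  by (subst index_mult_mat_sum[of _ m n]) auto

lemma gram_mat_mult:
  assumes C: "(C :: complex mat) \<in> carrier_mat n m" and E: "E \<in> carrier_mat m k"
  shows "mat_adjoint (C * E) * (C * E) = mat_adjoint E * (mat_adjoint C * C) * E"
proof -
  have Ca: "mat_adjoint C \<in> carrier_mat m n" and Ea: "mat_adjoint E \<in> carrier_mat k m"
    using C E by auto
  have "mat_adjoint (C * E) * (C * E) = mat_adjoint E * mat_adjoint C * (C * E)"
    unfolding mat_adjoint_mult[OF C E] ..
  also have "\<dots> = mat_adjoint E * (mat_adjoint C * (C * E))"
    using assoc_mult_mat[OF Ea Ca mult_carrier_mat[OF C E]] .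
  also have "mat_adjoint C * (C * E) = mat_adjoint C * C * E"
    using assoc_mult_mat[OF Ca C E] by simp
  also have "mat_adjoint E * (mat_adjoint C * C * E) = mat_adjoint E * (mat_adjoint C * C) * E"
    using assoc_mult_mat[OF Ea _ E, of "mat_adjoint C * C"] Ca C by simp
  finally show ?thesis .
qed

lemma det_gram_mat_mult:
  assumes C: "(C :: complex mat) \<in> carrier_mat n m" and E: "E \<in> carrier_mat m m"
  shows "det (mat_adjoint (C * E) * (C * E)) = cnj (det E) * det (mat_adjoint C * C) * det E"
proof -
  have K: "mat_adjoint C * C \<in> carrier_mat m m" using C by (intro mult_carrier_mat) auto
  note EK = mult_carrier_mat[OF mat_adjoint_carrier[OF E] K]
  show ?thesis
    unfolding gram_mat_mult[OF C E] det_mult[OF EK E] det_mult[OF mat_adjoint_carrier[OF E] K]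
      det_mat_adjoint[OF E] ..
qed

lemma vnorm_power2: "(vnorm v)^2 = (\<Sum>i<dim_vec v. (cmod (v $ i))^2)"
  unfolding vnorm_def by (simp add: sum_nonneg)

lemma vnorm_nonneg: "0 \<le> vnorm v"
  unfolding vnorm_def by (simp add: sum_nonneg)

lemma vnorm_col_power2:
  "C \<in> carrier_mat n m \<Longrightarrow> j < m \<Longrightarrow> (vnorm (col C j))^2 = (\<Sum>l<n. (cmod (C $$ (l, j)))^2)"
  by (simp add: vnorm_power2)

lemma cnj_mult_self: "cnj z * z = complex_of_real ((cmod z)^2)"
  by (simp only: complex_norm_square mult.commute)

lemma index_gram_mat_diag:
  assumes C: "C \<in> carrier_mat n m" and k: "k < m"
  shows "(mat_adjoint C * C) $$ (k, k) = complex_of_real ((vnorm (col C k))^2)"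
  unfolding index_gram_mat[OF C k k] vnorm_col_power2[OF C k] of_real_sum
  by (simp add: cnj_mult_self)

lemma sum_cmod_power2_diff_orthogonal:
  fixes x y :: "nat \<Rightarrow> complex"
  assumes orth: "(\<Sum>l<n. cnj (y l) * x l) = 0"
  shows "(\<Sum>l<n. (cmod (x l - c * y l))^2) = (\<Sum>l<n. (cmod (x l))^2) + (cmod c)^2 * (\<Sum>l<n. (cmod (y l))^2)"
proof -
  have expand: "complex_of_real ((cmod (x l - c * y l))^2) = cnj (x l) * x l - c * cnj (cnj (y l) * x l)
     - cnj c * (cnj (y l) * x l) + complex_of_real ((cmod c)^2) * complex_of_real ((cmod (y l))^2)" for l
    by (simp only: complex_norm_square) (simp add: algebra_simps)
  have "complex_of_real (\<Sum>l<n. (cmod (x l - c * y l))^2)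
      = (\<Sum>l<n. cnj (x l) * x l) - c * cnj (\<Sum>l<n. cnj (y l) * x l) - cnj c * (\<Sum>l<n. cnj (y l) * x l)
        + complex_of_real ((cmod c)^2) * complex_of_real (\<Sum>l<n. (cmod (y l))^2)"
    by (simp only: of_real_sum expand sum.distrib sum_subtractf sum_distrib_left cnj_sum)
  also have "\<dots> = complex_of_real ((\<Sum>l<n. (cmod (x l))^2) + (cmod c)^2 * (\<Sum>l<n. (cmod (y l))^2))"
    using orth by (simp only: of_real_add of_real_mult of_real_sum cnj_mult_self) simp
  finally show ?thesis using of_real_eq_iff by blast
qed

lemma cmod_sum_cnj_mult_le:
  "cmod (\<Sum>l<n. cnj (b l) * w l) \<le> sqrt (\<Sum>l<n. (cmod (b l))^2) * sqrt (\<Sum>l<n. (cmod (w l))^2)"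
proof -
  have "cmod (\<Sum>l<n. cnj (b l) * w l) \<le> (\<Sum>l<n. \<bar>cmod (b l)\<bar> * \<bar>cmod (w l)\<bar>)"
    using norm_sum[of "\<lambda>l. cnj (b l) * w l"] by (simp add: norm_mult)
  also have "\<dots> \<le> L2_set (\<lambda>l. cmod (b l)) {..<n} * L2_set (\<lambda>l. cmod (w l)) {..<n}"
    by (rule L2_set_mult_ineq)
  finally show ?thesis unfolding L2_set_def .
qed

definition mat_delete_col :: "'a mat \<Rightarrow> nat \<Rightarrow> 'a mat" where
  "mat_delete_col A k = mat (dim_row A) (dim_col A - 1) (\<lambda>(i, j). A $$ (i, if j < k then j else Suc j))"

lemma mat_delete_col_carrier: "A \<in> carrier_mat n m \<Longrightarrow> mat_delete_col A k \<in> carrier_mat n (m - 1)"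
  unfolding mat_delete_col_def by simp

lemma col_mat_delete_col:
  "A \<in> carrier_mat n m \<Longrightarrow> j < m - 1 \<Longrightarrow> col (mat_delete_col A k) j = col A (if j < k then j else Suc j)"
  unfolding mat_delete_col_def by (intro eq_vecI) auto

lemma mat_delete_gram_mat:
  assumes C: "(C :: complex mat) \<in> carrier_mat n m"
  shows "mat_delete (mat_adjoint C * C) k k = mat_adjoint (mat_delete_col C k) * mat_delete_col C k"
    (is "_ = mat_adjoint ?D * ?D")
proof (rule eq_matI)
  have D: "?D \<in> carrier_mat n (m - 1)" using C by (rule mat_delete_col_carrier)
  fix i j assume "i < dim_row (mat_adjoint ?D * ?D)" "j < dim_col (mat_adjoint ?D * ?D)"
  then have i: "i < m - 1" and j: "j < m - 1" using D by auto
  let ?i = "if i < k then i else Suc i" and ?j = "if j < k then j else Suc j"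
  have "mat_delete (mat_adjoint C * C) k k $$ (i, j) = (mat_adjoint C * C) $$ (?i, ?j)"
    using i j C unfolding mat_delete_def by simp
  also have "\<dots> = (\<Sum>l<n. cnj (C $$ (l, ?i)) * C $$ (l, ?j))"
    using i j by (intro index_gram_mat[OF C]) auto
  also have "\<dots> = (\<Sum>l<n. cnj (?D $$ (l, i)) * ?D $$ (l, j))"
    using i j C unfolding mat_delete_col_def by (intro sum.cong) auto
  also have "\<dots> = (mat_adjoint ?D * ?D) $$ (i, j)"
    by (rule index_gram_mat[OF D i j, symmetric])
  finally show "mat_delete (mat_adjoint C * C) k k $$ (i, j) = (mat_adjoint ?D * ?D) $$ (i, j)" .
qed (use C in \<open>auto simp: mat_delete_col_def\<close>)

lemma det_gram_mat_zero_col: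
  assumes C: "(C :: complex mat) \<in> carrier_mat n m" and k: "k < m" and zero: "vnorm (col C k) = 0"
  shows "det (mat_adjoint C * C) = 0"
proof -
  have "(\<Sum>l<n. (cmod (C $$ (l, k)))^2) = 0"
    using zero vnorm_col_power2[OF C k] by simp
  then have "C $$ (l, k) = 0" if "l < n" for l
    using that by (subst (asm) sum_nonneg_eq_0_iff) auto
  then have row_zero: "(mat_adjoint C * C) $$ (k, j) = 0" if "j < m" for j
    using that k unfolding index_gram_mat[OF C k that] by simp
  have "mat_adjoint C * C \<in> carrier_mat m m"
    using C by (intro mult_carrier_mat[of _ m n]) auto
  then have "det (mat_adjoint C * C) = (\<Sum>j<m. (mat_adjoint C * C) $$ (k, j) * cofactor (mat_adjoint C * C) k j)"
    by (rule laplace_expansion_row[OF _ k])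
  also have "\<dots> = 0"
    using row_zero by (intro sum.neutral) auto
  finally show ?thesis .
qed

(* Right multiplication by elim_mat n c adds c j times the first column to column j; with
   c j = - <b_0, b_j> / |b_0|^2 this is one Gram-Schmidt step. *)

definition elim_mat :: "nat \<Rightarrow> (nat \<Rightarrow> complex) \<Rightarrow> complex mat" where
  "elim_mat n c = mat n n (\<lambda>(i, j). if i = j then 1 else if i = 0 then c j else 0)"

lemma elim_mat_carrier: "elim_mat n c \<in> carrier_mat n n"
  unfolding elim_mat_def by simp

lemma det_elim_mat: "det (elim_mat n c) = 1"
proof -
  have "upper_triangular (elim_mat n c)" unfolding elim_mat_def by auto
  moreover have "diag_mat (elim_mat n c) = replicate n 1"
    by (rule nth_equalityI) (auto simp: diag_mat_def elim_mat_def)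
  ultimately show ?thesis using det_upper_triangular[OF _ elim_mat_carrier] by simp
qed

lemma index_mult_elim_mat:
  assumes C: "C \<in> carrier_mat n m" and l: "l < n" and j: "j < m"
  shows "(C * elim_mat m c) $$ (l, j) = (if j = 0 then C $$ (l, 0) else C $$ (l, j) + c j * C $$ (l, 0))"
proof -
  have "(C * elim_mat m c) $$ (l, j) = (\<Sum>i<m. C $$ (l, i) * elim_mat m c $$ (i, j))"
    by (rule index_mult_mat_sum[OF C elim_mat_carrier l j])
  also have "\<dots> = (\<Sum>i<m. (if i = j then C $$ (l, i) else 0) +
                      (if j \<noteq> 0 \<and> i = 0 then c j * C $$ (l, i) else 0))"
    using j unfolding elim_mat_def by (intro sum.cong) auto
  finally show ?thesis
    using j by (cases "j = 0") (auto simp: sum.distrib)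
qed

lemma index_gram_mult_elim_mat_first_row:
  assumes C: "(C :: complex mat) \<in> carrier_mat n m" and j: "j < m"
  shows "(mat_adjoint (C * elim_mat m c) * (C * elim_mat m c)) $$ (0, j)
    = (if j = 0 then (mat_adjoint C * C) $$ (0, 0)
       else (mat_adjoint C * C) $$ (0, j) + c j * (mat_adjoint C * C) $$ (0, 0))"
proof -
  have m: "0 < m" using j by simp
  have C': "C * elim_mat m c \<in> carrier_mat n m" using C elim_mat_carrier by (rule mult_carrier_mat)
  have "(mat_adjoint (C * elim_mat m c) * (C * elim_mat m c)) $$ (0, j)
      = (\<Sum>l<n. cnj (C $$ (l, 0)) * (if j = 0 then C $$ (l, 0) else C $$ (l, j) + c j * C $$ (l, 0)))"
    unfolding index_gram_mat[OF C' m j] using m j by (intro sum.cong) (simp_all add: index_mult_elim_mat[OF C])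
  also have "\<dots> = (if j = 0 then (mat_adjoint C * C) $$ (0, 0)
       else (mat_adjoint C * C) $$ (0, j) + c j * (mat_adjoint C * C) $$ (0, 0))"
    unfolding index_gram_mat[OF C m j] index_gram_mat[OF C m m]
    by (simp add: algebra_simps sum.distrib sum_distrib_left)
  finally show ?thesis .
qed

lemma vnorm_col_mult_elim_mat_le:
  assumes C: "(C :: complex mat) \<in> carrier_mat n m" and j: "0 < j" "j < m"
    and orth: "(mat_adjoint (C * elim_mat m c) * (C * elim_mat m c)) $$ (0, j) = 0"
  shows "vnorm (col (C * elim_mat m c) j) \<le> vnorm (col C j)"
proof -
  let ?C' = "C * elim_mat m c"
  have C': "?C' \<in> carrier_mat n m" using C elim_mat_carrier by (rule mult_carrier_mat)
  have m: "0 < m" using j by simp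
  have col0: "?C' $$ (l, 0) = C $$ (l, 0)" and colj: "C $$ (l, j) = ?C' $$ (l, j) - c j * C $$ (l, 0)"
    if "l < n" for l
    using that j m by (simp_all add: index_mult_elim_mat[OF C])
  have "(\<Sum>l<n. cnj (C $$ (l, 0)) * ?C' $$ (l, j)) = 0"
    using orth unfolding index_gram_mat[OF C' m j(2)] by (simp add: col0)
  then have "(vnorm (col C j))^2 = (vnorm (col ?C' j))^2 + (cmod (c j))^2 * (vnorm (col C 0))^2"
    unfolding vnorm_col_power2[OF C j(2)] vnorm_col_power2[OF C' j(2)] vnorm_col_power2[OF C m]
    by (simp add: colj sum_cmod_power2_diff_orthogonal)
  then have "(vnorm (col ?C' j))^2 \<le> (vnorm (col C j))^2" by simp
  then show ?thesis using vnorm_nonneg by (rule power2_le_imp_le)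
qed

lemma det_gram_mat_split_first_col:
  assumes C: "(C :: complex mat) \<in> carrier_mat n (Suc m)" and nonzero: "vnorm (col C 0) \<noteq> 0"
  obtains D where "D \<in> carrier_mat n m"
    and "det (mat_adjoint C * C) = complex_of_real ((vnorm (col C 0))^2) * det (mat_adjoint D * D)"
    and "\<And>j. j < m \<Longrightarrow> vnorm (col D j) \<le> vnorm (col C (Suc j))"
proof -
  define K where "K = mat_adjoint C * C"
  have K00: "K $$ (0, 0) = complex_of_real ((vnorm (col C 0))^2)"
    unfolding K_def by (rule index_gram_mat_diag[OF C]) simp
  define c where "c j = - K $$ (0, j) / K $$ (0, 0)" for j
  define C' where "C' = C * elim_mat (Suc m) c"
  have C': "C' \<in> carrier_mat n (Suc m)" unfolding C'_def using C elim_mat_carrier by (rule mult_carrier_mat)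
  define K' where "K' = mat_adjoint C' * C'"
  have K': "K' \<in> carrier_mat (Suc m) (Suc m)" unfolding K'_def using C' by (intro mult_carrier_mat) auto
  have first_row: "K' $$ (0, j) = (if j = 0 then K $$ (0, 0) else 0)" if "j < Suc m" for j
    using index_gram_mult_elim_mat_first_row[OF C that, of c] nonzero K00
    unfolding K'_def C'_def K_def c_def by simp
  have "det K = det K'"
    unfolding K_def K'_def C'_def det_gram_mat_mult[OF C elim_mat_carrier] det_elim_mat by simp
  also have "\<dots> = (\<Sum>j<Suc m. K' $$ (0, j) * cofactor K' 0 j)"
    by (rule laplace_expansion_row[OF K']) simp
  also have "\<dots> = K $$ (0, 0) * det (mat_delete K' 0 0)"
    by (subst sum.lessThan_Suc_shift) (simp add: first_row cofactor_def)
  also have "mat_delete K' 0 0 = mat_adjoint (mat_delete_col C' 0) * mat_delete_col C' 0"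
    unfolding K'_def by (rule mat_delete_gram_mat[OF C'])
  finally have det_split: "det K = K $$ (0, 0) * det (mat_adjoint (mat_delete_col C' 0) * mat_delete_col C' 0)" .
  show ?thesis
  proof (rule that)
    show "mat_delete_col C' 0 \<in> carrier_mat n m"
      using mat_delete_col_carrier[OF C'] by simp
    show "det (mat_adjoint C * C) = complex_of_real ((vnorm (col C 0))^2)
        * det (mat_adjoint (mat_delete_col C' 0) * mat_delete_col C' 0)"
      using det_split unfolding K00 by (simp only: K_def)
  next
    fix j assume j: "j < m"
    have "col (mat_delete_col C' 0) j = col C' (Suc j)"
      using col_mat_delete_col[OF C'] j by simp
    moreover have "vnorm (col C' (Suc j)) \<le> vnorm (col C (Suc j))"
      unfolding C'_def using first_row[of "Suc j"] j
      by (intro vnorm_col_mult_elim_mat_le[OF C]) (simp_all add: K'_def C'_def)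
    ultimately show "vnorm (col (mat_delete_col C' 0) j) \<le> vnorm (col C (Suc j))" by simp
  qed
qed

lemma hadamard_gram_mat:
  assumes "(C :: complex mat) \<in> carrier_mat n m"
  shows "Im (det (mat_adjoint C * C)) = 0 \<and> 0 \<le> Re (det (mat_adjoint C * C)) \<and>
         Re (det (mat_adjoint C * C)) \<le> (\<Prod>j<m. (vnorm (col C j))^2)"
  using assms
proof (induction m arbitrary: C)
  case 0
  then have "mat_adjoint C * C \<in> carrier_mat 0 0" by (intro mult_carrier_mat) auto
  then show ?case by simp
next
  case (Suc m)
  have bound_nonneg: "0 \<le> (\<Prod>j<Suc m. (vnorm (col C j))^2)" by (simp add: prod_nonneg)
  show ?case
  proof (cases "vnorm (col C 0) = 0")
    case True
    then have "det (mat_adjoint C * C) = 0" by (intro det_gram_mat_zero_col[OF Suc.prems]) auto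
    then show ?thesis using bound_nonneg by simp
  next
    case False
    then obtain D where D: "D \<in> carrier_mat n m"
      and det_split: "det (mat_adjoint C * C) = complex_of_real ((vnorm (col C 0))^2) * det (mat_adjoint D * D)"
      and col_le: "\<And>j. j < m \<Longrightarrow> vnorm (col D j) \<le> vnorm (col C (Suc j))"
      using det_gram_mat_split_first_col[OF Suc.prems] by blast
    note IH = Suc.IH[OF D]
    have "(vnorm (col C 0))^2 * Re (det (mat_adjoint D * D)) \<le> (vnorm (col C 0))^2 * (\<Prod>j<m. (vnorm (col D j))^2)"
      using IH by (simp add: mult_left_mono)
    also have "\<dots> \<le> (vnorm (col C 0))^2 * (\<Prod>j<m. (vnorm (col C (Suc j)))^2)"
      using col_le vnorm_nonneg by (intro mult_left_mono prod_mono power_mono) auto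
    also have "\<dots> = (\<Prod>j<Suc m. (vnorm (col C j))^2)"
      by (simp only: prod.lessThan_Suc_shift)
    finally show ?thesis using IH unfolding det_split by simp
  qed
qed

lemma mat_inv_eq_adj_mat:
  assumes A: "A \<in> carrier_mat n n" and d: "det A \<noteq> 0"
  shows "mat_inv A = (1 / det A) \<cdot>\<^sub>m adj_mat A"
proof -
  define W where "W = (1 / det A) \<cdot>\<^sub>m adj_mat A"
  have adj: "adj_mat A \<in> carrier_mat n n" by (rule adj_mat(1)[OF A])
  have W: "W \<in> carrier_mat n n" unfolding W_def using adj by simp
  have "A * W = (1 / det A) \<cdot>\<^sub>m (det A \<cdot>\<^sub>m 1\<^sub>m n)"
    unfolding W_def mult_smult_distrib[OF A adj] adj_mat(2)[OF A] ..
  also have "\<dots> = 1\<^sub>m n" by (rule eq_matI) (use d in auto)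
  finally have AW: "A * W = 1\<^sub>m n" .
  have "W * A = (1 / det A) \<cdot>\<^sub>m (det A \<cdot>\<^sub>m 1\<^sub>m n)"
    unfolding W_def mult_smult_assoc_mat[OF adj A] adj_mat(3)[OF A] ..
  also have "\<dots> = 1\<^sub>m n" by (rule eq_matI) (use d in auto)
  finally have WA: "W * A = 1\<^sub>m n" .
  have "\<exists>B. B \<in> carrier_mat (dim_row A) (dim_row A) \<and> inverts_mat A B \<and> inverts_mat B A"
    using W AW WA A unfolding inverts_mat_def by (intro exI[of _ W]) auto
  from someI_ex[OF this] have Ai: "mat_inv A \<in> carrier_mat n n" and AiA: "mat_inv A * A = 1\<^sub>m n"
    unfolding mat_inv_def inverts_mat_def using A by auto
  have "mat_inv A = mat_inv A * (A * W)" using AW Ai by simp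
  also have "\<dots> = W" using assoc_mult_mat[OF Ai A W] AiA W by simp
  finally show ?thesis unfolding W_def .
qed

lemma mat_inv:
  assumes A: "A \<in> carrier_mat n n" and d: "det A \<noteq> 0"
  shows "mat_inv A \<in> carrier_mat n n" "A * mat_inv A = 1\<^sub>m n" "mat_inv A * A = 1\<^sub>m n"
proof -
  have "mat_inv A = (1 / det A) \<cdot>\<^sub>m adj_mat A" by (rule mat_inv_eq_adj_mat[OF A d])
  moreover have adj: "adj_mat A \<in> carrier_mat n n" by (rule adj_mat(1)[OF A])
  ultimately show "mat_inv A \<in> carrier_mat n n" "A * mat_inv A = 1\<^sub>m n" "mat_inv A * A = 1\<^sub>m n"
    using d by (auto simp: mult_smult_distrib[OF A adj] mult_smult_assoc_mat[OF adj A] adj_mat[OF A]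
      intro!: eq_matI)
qed

lemma det_nonzero_if_right_inverse:
  "A \<in> carrier_mat n n \<Longrightarrow> B \<in> carrier_mat n n \<Longrightarrow> A * B = 1\<^sub>m n \<Longrightarrow> det A \<noteq> 0"
  using det_mult[of A n B] by auto

lemma mat_inv_eqI:
  assumes A: "A \<in> carrier_mat n n" and B: "B \<in> carrier_mat n n" and AB: "A * B = 1\<^sub>m n"
  shows "mat_inv A = B"
proof -
  note inv = mat_inv[OF A det_nonzero_if_right_inverse[OF A B AB]]
  have "mat_inv A = mat_inv A * (A * B)" using AB inv(1) by simp
  also have "\<dots> = B" using assoc_mult_mat[OF inv(1) A B] inv(3) B by simp
  finally show ?thesis .
qed

lemma mat_adjoint_mat_inv_hermitian:
  assumes A: "(A :: complex mat) \<in> carrier_mat n n" and herm: "mat_adjoint A = A" and d: "det A \<noteq> 0"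
  shows "mat_adjoint (mat_inv A) = mat_inv A"
proof -
  note inv = mat_inv[OF A d]
  have "A * mat_adjoint (mat_inv A) = mat_adjoint (mat_inv A * A)"
    using mat_adjoint_mult[OF inv(1) A] herm by simp
  also have "\<dots> = 1\<^sub>m n" using inv by simp
  finally have "mat_inv A = mat_adjoint (mat_inv A)"
    using mat_inv_eqI[OF A] mat_adjoint_carrier[OF inv(1)] by blast
  then show ?thesis by simp
qed

lemma index_mat_inv_diag:
  assumes A: "A \<in> carrier_mat n n" and d: "det A \<noteq> 0" and k: "k < n"
  shows "mat_inv A $$ (k, k) = det (mat_delete A k k) / det A"
  using A k unfolding mat_inv_eq_adj_mat[OF A d]
  by (simp add: adj_mat_def cofactor_def mult_2[symmetric])

lemma pinv_H_carrier:
  assumes A: "A \<in> carrier_mat n m" and d: "det (mat_adjoint A * A) \<noteq> 0"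
  shows "pinv_H A \<in> carrier_mat n m"
proof -
  have "mat_adjoint A * A \<in> carrier_mat m m" using A by (intro mult_carrier_mat) auto
  then show ?thesis unfolding pinv_H_def using A mat_inv(1)[OF _ d] by simp
qed

lemma adjoint_pinv_H_mult_self:
  assumes A: "A \<in> carrier_mat n m" and d: "det (mat_adjoint A * A) \<noteq> 0"
  shows "mat_adjoint (pinv_H A) * A = 1\<^sub>m m"
proof -
  have Aa: "mat_adjoint A \<in> carrier_mat m n" using A by simp
  have K: "mat_adjoint A * A \<in> carrier_mat m m" using Aa A by (rule mult_carrier_mat)
  note inv = mat_inv[OF K d]
  have herm: "mat_adjoint (mat_adjoint A * A) = mat_adjoint A * A"
    using mat_adjoint_mult[OF Aa A] by simp
  have "mat_adjoint (pinv_H A) = mat_inv (mat_adjoint A * A) * mat_adjoint A"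
    unfolding pinv_H_def mat_adjoint_mult[OF A inv(1)] mat_adjoint_mat_inv_hermitian[OF K herm d] ..
  then show ?thesis
    using assoc_mult_mat[OF inv(1) Aa A] inv(3) by simp
qed

lemma gram_mat_pinv_H:
  assumes A: "A \<in> carrier_mat n m" and d: "det (mat_adjoint A * A) \<noteq> 0"
  shows "mat_adjoint (pinv_H A) * pinv_H A = mat_inv (mat_adjoint A * A)"
proof -
  have K: "mat_adjoint A * A \<in> carrier_mat m m" using A by (intro mult_carrier_mat) auto
  note inv = mat_inv[OF K d]
  have P: "mat_adjoint (pinv_H A) \<in> carrier_mat m n"
    using pinv_H_carrier[OF A d] by simp
  show ?thesis
    unfolding pinv_H_def assoc_mult_mat[OF P[unfolded pinv_H_def] A inv(1), symmetric]
      adjoint_pinv_H_mult_self[OF A d, unfolded pinv_H_def] using inv(1) by simp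
qed

lemma det_gram_mat_pinv_H_nonzero:
  assumes A: "A \<in> carrier_mat n m" and d: "det (mat_adjoint A * A) \<noteq> 0"
  shows "det (mat_adjoint (pinv_H A) * pinv_H A) \<noteq> 0"
proof -
  have K: "mat_adjoint A * A \<in> carrier_mat m m" using A by (intro mult_carrier_mat) auto
  note inv = mat_inv[OF K d]
  show ?thesis
    unfolding gram_mat_pinv_H[OF A d] using det_nonzero_if_right_inverse[OF inv(1) K inv(3)] .
qed

lemma prod_lessThan_skip_index:
  fixes f :: "nat \<Rightarrow> 'a :: comm_monoid_mult"
  assumes k: "k < m"
  shows "(\<Prod>j<m - 1. f (if j < k then j else Suc j)) * f k = (\<Prod>j<m. f j)"
proof -
  have "(\<Prod>j<m. f j) = f k * (\<Prod>j\<in>{..<m} - {k}. f j)"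
    using k by (subst prod.remove[of _ k]) auto
  also have "(\<Prod>j\<in>{..<m} - {k}. f j) = (\<Prod>j<m - 1. f (if j < k then j else Suc j))"
    by (rule prod.reindex_bij_witness[where i = "\<lambda>j. if j < k then j else Suc j"
          and j = "\<lambda>j. if j < k then j else j - 1"]) (use k in auto)
  finally show ?thesis by (simp add: mult.commute)
qed

lemma dual_col_vnorm_mult_col_vnorm_le_orth_defect:
  assumes B: "(B :: complex mat) \<in> carrier_mat n m" and d: "det (mat_adjoint B * B) \<noteq> 0" and k: "k < m"
  shows "(vnorm (col (pinv_H B) k))^2 * (vnorm (col B k))^2 \<le> orth_defect B"
proof -
  define K where "K = mat_adjoint B * B"
  have K: "K \<in> carrier_mat m m" unfolding K_def using B by (intro mult_carrier_mat) auto
  define D where "D = mat_delete_col B k"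
  have D: "D \<in> carrier_mat n (m - 1)" unfolding D_def by (rule mat_delete_col_carrier[OF B])
  define r where "r = Re (det K)"
  define r' where "r' = Re (det (mat_adjoint D * D))"
  note hadamard_B = hadamard_gram_mat[OF B, folded K_def r_def]
  note hadamard_D = hadamard_gram_mat[OF D, folded r'_def]
  have r: "det K = complex_of_real r" and r': "det (mat_adjoint D * D) = complex_of_real r'"
    using hadamard_B hadamard_D unfolding r_def r'_def by (simp_all add: complex_eq_iff)
  have r_pos: "0 < r" using hadamard_B d r unfolding K_def by (auto simp: less_le)
  have P: "pinv_H B \<in> carrier_mat n m" by (rule pinv_H_carrier[OF B d])
  have "complex_of_real ((vnorm (col (pinv_H B) k))^2) = mat_inv K $$ (k, k)"
    using index_gram_mat_diag[OF P k] gram_mat_pinv_H[OF B d] unfolding K_def by simp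
  also have "\<dots> = det (mat_delete K k k) / det K"
    by (rule index_mat_inv_diag[OF K d[folded K_def] k])
  also have "\<dots> = complex_of_real (r' / r)"
    unfolding K_def mat_delete_gram_mat[OF B] D_def[symmetric] r[unfolded K_def] r' by simp
  finally have dual_norm: "(vnorm (col (pinv_H B) k))^2 = r' / r" by (simp only: of_real_eq_iff)
  have "(\<Prod>j<m - 1. (vnorm (col D j))^2) = (\<Prod>j<m - 1. (vnorm (col B (if j < k then j else Suc j)))^2)"
    unfolding D_def by (intro prod.cong) (simp_all add: col_mat_delete_col[OF B])
  then have "(\<Prod>j<m - 1. (vnorm (col D j))^2) * (vnorm (col B k))^2 = (\<Prod>j<m. (vnorm (col B j))^2)"
    using prod_lessThan_skip_index[OF k, of "\<lambda>j. (vnorm (col B j))^2"] by simp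
  moreover have "r' \<le> (\<Prod>j<m - 1. (vnorm (col D j))^2)" using hadamard_D by simp
  ultimately have "r' * (vnorm (col B k))^2 \<le> (\<Prod>j<m. (vnorm (col B j))^2)"
    by (metis mult_right_mono zero_le_power2)
  then show ?thesis
    unfolding dual_norm orth_defect_def using B r_pos
    by (simp add: r_def K_def divide_right_mono)
qed

lemma gram_mult_vec_eq_zero:
  assumes C: "(C :: complex mat) \<in> carrier_mat n m" and v: "v \<in> carrier_vec m"
    and zero: "(mat_adjoint C * C) *\<^sub>v v = 0\<^sub>v m"
  shows "C *\<^sub>v v = 0\<^sub>v n"
proof -
  define u where "u = C *\<^sub>v v"
  have u: "u \<in> carrier_vec n" unfolding u_def using C v by simp
  have "mat_adjoint C *\<^sub>v u = 0\<^sub>v m"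
    using zero assoc_mult_mat_vec[OF mat_adjoint_carrier[OF C] C v] unfolding u_def by simp
  then have "0 = (\<Sum>i<m. cnj (v $ i) * (mat_adjoint C *\<^sub>v u) $ i)" by simp
  also have "\<dots> = (\<Sum>i<m. cnj (v $ i) * (\<Sum>l<n. cnj (C $$ (l, i)) * u $ l))"
    using C u by (intro sum.cong) (auto simp: scalar_prod_def lessThan_atLeast0)
  also have "\<dots> = (\<Sum>l<n. (\<Sum>i<m. cnj (C $$ (l, i) * v $ i)) * u $ l)"
    by (simp add: sum_distrib_left sum_distrib_right algebra_simps) (rule sum.swap)
  also have "\<dots> = (\<Sum>l<n. cnj (u $ l) * u $ l)"
    using C v unfolding u_def by (intro sum.cong) (auto simp: cnj_sum scalar_prod_def lessThan_atLeast0)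
  also have "\<dots> = complex_of_real (\<Sum>l<n. (cmod (u $ l))^2)"
    unfolding of_real_sum by (simp add: cnj_mult_self)
  finally have "(\<Sum>l<n. (cmod (u $ l))^2) = 0" by (metis of_real_eq_0_iff)
  then have "u $ l = 0" if "l < n" for l
    using that by (subst (asm) sum_nonneg_eq_0_iff) auto
  then show ?thesis using u unfolding u_def[symmetric] by auto
qed

lemma full_col_rank_mult_vec_eq_zero:
  assumes C: "C \<in> carrier_mat n m" and rank: "vec_space.rank n C = m"
    and v: "v \<in> carrier_vec m" and zero: "C *\<^sub>v v = 0\<^sub>v n"
  shows "v = 0\<^sub>v m"
proof (rule ccontr)
  assume nonzero: "v \<noteq> 0\<^sub>v m"
  interpret vec_space "TYPE('a :: field)" n .
  show False
  proof (cases "distinct (cols C)")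
    case True
    then show False
      using full_rank_lin_indpt[OF C rank True] lin_depI[OF C v nonzero zero True] by simp
  next
    case False
    obtain S where S: "maximal S (\<lambda>T. T \<subseteq> set (cols C) \<and> lin_indpt T)"
      using maximal_exists[of "\<lambda>T. T \<subseteq> set (cols C) \<and> lin_indpt T" "card (set (cols C))" "{}"]
      by (meson List.finite_set card_mono empty_iff empty_subsetI finite_lin_indpt2 rev_finite_subset)
    then have "card S \<le> card (set (cols C))" by (simp add: card_mono maximal_def)
    also have "\<dots> < length (cols C)" using False card_distinct card_length le_neq_implies_less by blast
    finally have "card S < m" using C by simp
    then show False using rank_card_indpt[OF C S] rank by simp
  qed
qed

lemma det_gram_mat_nonzero_if_full_rank:
  assumes C: "(C :: complex mat) \<in> carrier_mat n m" and rank: "vec_space.rank n C = m"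
  shows "det (mat_adjoint C * C) \<noteq> 0"
proof
  assume "det (mat_adjoint C * C) = 0"
  moreover have "mat_adjoint C * C \<in> carrier_mat m m" using C by (intro mult_carrier_mat) auto
  ultimately obtain v where v: "v \<in> carrier_vec m" "v \<noteq> 0\<^sub>v m" "(mat_adjoint C * C) *\<^sub>v v = 0\<^sub>v m"
    using det_0_iff_vec_prod_zero_field by blast
  then show False
    using full_col_rank_mult_vec_eq_zero[OF C rank v(1) gram_mult_vec_eq_zero[OF C v(1,3)]] by simp
qed

lemma det_gram_mat_mult_nonzero:
  assumes C: "(C :: complex mat) \<in> carrier_mat n m" and d: "det (mat_adjoint C * C) \<noteq> 0"
    and E: "E \<in> carrier_mat m m" and dE: "det E \<noteq> 0"
  shows "det (mat_adjoint (C * E) * (C * E)) \<noteq> 0"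
  unfolding det_gram_mat_mult[OF C E] using d dE by simp

lemma gauss_int_mult: "gauss_int a \<Longrightarrow> gauss_int b \<Longrightarrow> gauss_int (a * b)"
  unfolding gauss_int_def by auto

lemma gauss_int_cnj: "gauss_int a \<Longrightarrow> gauss_int (cnj a)"
  unfolding gauss_int_def by auto

lemma gauss_int_sum: "(\<And>i. i \<in> S \<Longrightarrow> gauss_int (f i)) \<Longrightarrow> gauss_int (sum f S)"
  unfolding gauss_int_def by (auto simp: Re_sum Im_sum intro: Ints_sum)

lemma gauss_vec_adjoint_mult_vec:
  assumes U: "U \<in> carrier_mat m k" "gauss_mat U" and x: "x \<in> carrier_vec m" "gauss_vec x"
  shows "gauss_vec (mat_adjoint U *\<^sub>v x)"
  unfolding gauss_vec_def
proof (intro allI impI)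
  fix i assume "i < dim_vec (mat_adjoint U *\<^sub>v x)"
  then have i: "i < k" using U by simp
  have "(mat_adjoint U *\<^sub>v x) $ i = (\<Sum>l<m. cnj (U $$ (l, i)) * x $ l)"
    using i U x by (simp add: scalar_prod_def lessThan_atLeast0)
  also have "gauss_int \<dots>"
    using U x i unfolding gauss_mat_def gauss_vec_def
    by (intro gauss_int_sum gauss_int_mult gauss_int_cnj) auto
  finally show "gauss_int ((mat_adjoint U *\<^sub>v x) $ i)" .
qed

lemma round_gauss_add_small:
  assumes "gauss_int g" "cmod e < 1/2"
  shows "round_gauss (g + e) = g"
proof -
  obtain a b where a: "Re g = of_int a" and b: "Im g = of_int b"
    using assms(1) unfolding gauss_int_def by (auto elim!: Ints_cases)
  have "round (Re g + Re e) = a"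
    using a assms(2) abs_Re_le_cmod[of e] by (intro round_unique) auto
  moreover have "round (Im g + Im e) = b"
    using b assms(2) abs_Im_le_cmod[of e] by (intro round_unique) auto
  ultimately show ?thesis unfolding round_gauss_def using a b by (simp add: complex_eq_iff)
qed

lemma round_vec_add_small:
  assumes g: "gauss_vec g" and e: "e \<in> carrier_vec (dim_vec g)"
    and small: "\<And>k. k < dim_vec g \<Longrightarrow> cmod (e $ k) < 1/2"
  shows "round_vec (g + e) = g"
  using assms unfolding gauss_vec_def round_vec_def
  by (intro eq_vecI) (auto simp: round_gauss_add_small)

lemma lll_decode_correct:
  assumes H: "H \<in> carrier_mat N M" and dG: "det (mat_adjoint H * H) \<noteq> 0" and U: "unimodular M U"
    and x: "x \<in> carrier_vec M" "gauss_vec x" and w: "w \<in> carrier_vec N"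
    and small: "\<And>k. k < M \<Longrightarrow> vnorm (col (pinv_H H * U) k) * vnorm w < 1/2"
  shows "lll_decode (pinv_H H * U) U (H *\<^sub>v x + w) = x"
proof -
  obtain V where U: "U \<in> carrier_mat M M" "gauss_mat U" and V: "V \<in> carrier_mat M M"
    and UV: "U * V = 1\<^sub>m M"
    using U unfolding unimodular_def inverts_mat_def by auto
  define B where "B = pinv_H H * U"
  have P: "pinv_H H \<in> carrier_mat N M" by (rule pinv_H_carrier[OF H dG])
  have Pa: "mat_adjoint (pinv_H H) \<in> carrier_mat M N" using P by simp
  have Ua: "mat_adjoint U \<in> carrier_mat M M" using U by simp
  have Ba: "mat_adjoint B \<in> carrier_mat M N" unfolding B_def using P U by simp
  have Bw: "mat_adjoint B *\<^sub>v w \<in> carrier_vec M" using Ba w by simp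
  have "mat_adjoint B *\<^sub>v (H *\<^sub>v x) = mat_adjoint U *\<^sub>v (mat_adjoint (pinv_H H) *\<^sub>v (H *\<^sub>v x))"
    unfolding B_def mat_adjoint_mult[OF P U(1)] using assoc_mult_mat_vec[OF Ua Pa] H x by simp
  also have "mat_adjoint (pinv_H H) *\<^sub>v (H *\<^sub>v x) = x"
    using assoc_mult_mat_vec[OF Pa H x(1)] adjoint_pinv_H_mult_self[OF H dG] x by simp
  finally have received: "mat_adjoint B *\<^sub>v (H *\<^sub>v x + w) = mat_adjoint U *\<^sub>v x + mat_adjoint B *\<^sub>v w"
    using mult_add_distrib_mat_vec[OF Ba _ w, of "H *\<^sub>v x"] H x by simp
  have noise: "cmod ((mat_adjoint B *\<^sub>v w) $ k) < 1/2" if k: "k < M" for k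
  proof -
    have "(mat_adjoint B *\<^sub>v w) $ k = (\<Sum>l<N. cnj (B $$ (l, k)) * w $ l)"
      unfolding B_def using k P U w by (simp add: scalar_prod_def lessThan_atLeast0)
    then have "cmod ((mat_adjoint B *\<^sub>v w) $ k) \<le> vnorm (col B k) * vnorm w"
      unfolding vnorm_def using k P U w by (simp add: B_def cmod_sum_cnj_mult_le)
    then show ?thesis using small[OF k] unfolding B_def by simp
  qed
  have "round_vec (mat_adjoint U *\<^sub>v x + mat_adjoint B *\<^sub>v w) = mat_adjoint U *\<^sub>v x"
    using gauss_vec_adjoint_mult_vec[OF U x] Bw noise Ua by (intro round_vec_add_small) auto
  then have "lll_decode B U (H *\<^sub>v x + w) = mat_adjoint V *\<^sub>v (mat_adjoint U *\<^sub>v x)"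
    unfolding lll_decode_def received mat_inv_eqI[OF U(1) V UV] by simp
  also have "\<dots> = mat_adjoint (U * V) *\<^sub>v x"
    using assoc_mult_mat_vec[OF mat_adjoint_carrier[OF V] Ua x(1)] mat_adjoint_mult[OF U(1) V] by simp
  finally show ?thesis unfolding B_def UV using x by simp
qed

lemma mult_lt_half_if_dual_bound:
  fixes a b \<mu> \<delta> \<omega> :: real
  assumes M: "1 \<le> M" and \<mu>: "0 \<le> \<mu>" "\<mu> \<le> a" and b: "0 \<le> b" and \<omega>: "0 \<le> \<omega>"
    and ab: "a^2 * b^2 \<le> \<delta>" and \<omega>_lt: "\<omega> < \<mu> / (2 * sqrt (real M * \<delta>))"
  shows "b * \<omega> < 1/2"
proof (cases "b = 0")
  case False
  define s where "s = sqrt (real M * \<delta>)"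
  have "0 < \<mu> / (2 * s)" using \<omega> \<omega>_lt unfolding s_def by linarith
  then have s: "0 < s" using \<mu>(1) by (auto simp: zero_less_divide_iff)
  have \<delta>: "\<delta> \<le> real M * \<delta>"
    using M ab order_trans[OF zero_le_mult_iff[THEN iffD2] ab] by (simp add: mult_le_cancel_right1)
  have "b * \<mu> \<le> b * a" using \<mu>(2) b by (rule mult_left_mono)
  also have "\<dots> = sqrt (a^2 * b^2)"
    using \<mu> b by (simp add: real_sqrt_mult)
  also have "\<dots> \<le> s"
    unfolding s_def using ab \<delta> by simp
  finally have b\<mu>: "b * \<mu> \<le> s" .
  have "b * \<omega> < b * (\<mu> / (2 * s))"
    using \<omega>_lt b False unfolding s_def by (intro mult_strict_left_mono) auto
  also have "\<dots> \<le> s / (2 * s)"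
    using b\<mu> s by (simp add: divide_right_mono)
  also have "\<dots> = 1/2" using s by simp
  finally show ?thesis .
qed simp

theorem lemma2:
  fixes M N :: nat and H U :: "complex mat" and x w :: "complex vec"
  assumes "1 \<le> M" and "M \<le> N"
    and "H \<in> carrier_mat N M"
    and "vec_space.rank N H = M"
    and "unimodular M U"
    and "lll_reduced (pinv_H H * U)"
    and "x \<in> carrier_vec M" and "gauss_vec x"
    and "w \<in> carrier_vec N"
    and "vnorm w < Min ((\<lambda>k. vnorm (col (pinv_H (pinv_H H * U)) k)) ` {..<M})
                   / (2 * sqrt (real M * orth_defect (pinv_H H * U)))"
  shows "lll_decode (pinv_H H * U) U (H *\<^sub>v x + w) = x"
proof -
  note H = assms(3)
  let ?B = "pinv_H H * U"
  have dG: "det (mat_adjoint H * H) \<noteq> 0" by (rule det_gram_mat_nonzero_if_full_rank[OF H assms(4)])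
  obtain V where U: "U \<in> carrier_mat M M" and V: "V \<in> carrier_mat M M" and UV: "U * V = 1\<^sub>m M"
    using assms(5) unfolding unimodular_def inverts_mat_def by auto
  have P: "pinv_H H \<in> carrier_mat N M" by (rule pinv_H_carrier[OF H dG])
  have B: "?B \<in> carrier_mat N M" using P U by simp
  have dB: "det (mat_adjoint ?B * ?B) \<noteq> 0"
    using det_gram_mat_mult_nonzero[OF P det_gram_mat_pinv_H_nonzero[OF H dG] U
      det_nonzero_if_right_inverse[OF U V UV]] .
  have "vnorm (col ?B k) * vnorm w < 1/2" if k: "k < M" for k
  proof (rule mult_lt_half_if_dual_bound[OF assms(1) _ _ vnorm_nonneg vnorm_nonneg
        dual_col_vnorm_mult_col_vnorm_le_orth_defect[OF B dB k] assms(10)])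
    show "0 \<le> Min ((\<lambda>k. vnorm (col (pinv_H ?B) k)) ` {..<M})"
      using k by (subst Min_ge_iff) (auto simp: vnorm_nonneg)
    show "Min ((\<lambda>k. vnorm (col (pinv_H ?B) k)) ` {..<M}) \<le> vnorm (col (pinv_H ?B) k)"
      using k by (intro Min_le) auto
  qed
  then show ?thesis by (rule lll_decode_correct[OF H dG assms(5,7,8,9)])
qed

end
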